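(* Let $\rho>\chi>1$ and suppose there exists a $(\rho,\chi)$-bidding profile $G$. Let $\phi:(0,1]\to[1,\infty)$ be the function inducing $G$ (i.e. $\phi=G|_{(0,1]}$). Then there exists a tight $(\rho,\chi')$-bidding profile $G'$ induced by $\phi$ with $\chi'\le\chi$.
   Context: Given $1<\chi\le\rho$, a $(\rho,\chi)$-bidding profile is a non-decreasing, left-continuous $G:\mathbb{R}\to(0,\infty)$ such that (offset) $G(x)<1$ for $x<0$ and $G(x)\ge 1$ for $x>0$; (robustness) $\int_{-\infty}^{x+1}G(t)\,\mathrm{d} t\le\rho G(x)$ for all $x\in\mathbb{R}$; (consistency) $\int_{-\infty}^1G(t)\,\mathrm{d} t\le\chi$. A bidding profile $G$ is induced by $\phi:(0,1]\to[1,\infty)$ if $G|_{(0,1]}\equiv\phi$. A $(\rho,\chi)$-bidding profile $G$ is tight if additionally $\int_{-\infty}^{x+1}G(t)\,\mathrm{d} t=\rho\,G(x)$ for all $x\le 0$ and $\int_{-\infty}^1G(t)\,\mathrm{d} t=\chi$. *)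

theory Defs
  imports "HOL-Analysis.Analysis"
begin

definition lower_integral :: "(real \<Rightarrow> real) \<Rightarrow> real \<Rightarrow> ennreal" where
  "lower_integral G a = (\<integral>\<^sup>+ t. ennreal (G t) * indicator {..a} t \<partial>lborel)"

definition bidding_profile :: "real \<Rightarrow> real \<Rightarrow> (real \<Rightarrow> real) \<Rightarrow> bool" where
  "bidding_profile rho chi G \<longleftrightarrow>
     1 < chi \<and> chi \<le> rho \<and>
     mono G \<and>
     (\<forall>x. continuous (at_left x) G) \<and>
     (\<forall>x. 0 < G x) \<and>
     (\<forall>x<0. G x < 1) \<and> (\<forall>x>0. G x \<ge> 1) \<and>
     (\<forall>x. lower_integral G (x + 1) \<le> ennreal (rho * G x)) \<and>
     lower_integral G 1 \<le> ennreal chi"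

definition tight_bidding_profile :: "real \<Rightarrow> real \<Rightarrow> (real \<Rightarrow> real) \<Rightarrow> bool" where
  "tight_bidding_profile rho chi G \<longleftrightarrow>
     bidding_profile rho chi G \<and>
     (\<forall>x\<le>0. lower_integral G (x + 1) = ennreal (rho * G x)) \<and>
     lower_integral G 1 = ennreal chi"

definition induced_by :: "(real \<Rightarrow> real) \<Rightarrow> (real \<Rightarrow> real) \<Rightarrow> bool" where
  "induced_by G \<phi> \<longleftrightarrow> (\<forall>x\<in>{0<..1}. G x = \<phi> x)"

end

theory Submission
  imports Defs
begin

(* The monotone minorants H of G that agree with G on (0, oo) and stay robust on (-oo, 0] form
   a set closed under pointwise infima, so it has a least element G'. The operator
   H x |-> (1/rho) * integral of H over (-oo, x + 1], applied for x <= 0, maps this set into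
   itself and lowers each member; hence G' is one of its fixed points, i.e. tight. Tightness
   makes G' Lipschitz on (-oo, 0], hence left-continuous, and forbids zeros: a zero at y <= 0
   kills the integral up to y + 1, so zeros move right in steps of 1/2 until they reach
   (0, oo), where G' = G > 0. Finally the consistency integral of G' is at most that of G,
   and exceeds 1 because G' >= 1 on (0, 1] and G' > 0 before. *)

lemma lower_integral_mono:
  assumes "\<And>t. t \<le> a \<Longrightarrow> F t \<le> H t"
  shows "lower_integral F a \<le> lower_integral H a"
  unfolding lower_integral_def
  by (intro nn_integral_mono) (auto simp: indicator_def intro: ennreal_leI assms)

lemma lower_integral_mono_bound:
  assumes "a \<le> b"
  shows "lower_integral F a \<le> lower_integral F b"
  unfolding lower_integral_def
  using assms by (intro nn_integral_mono mult_left_mono) (auto simp: indicator_def)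

lemma lower_integral_split:
  assumes "F \<in> borel_measurable borel" "a \<le> b"
  shows "lower_integral F b
           = lower_integral F a + (\<integral>\<^sup>+t\<in>{a<..b}. ennreal (F t) \<partial>lborel)"
proof -
  have "indicator {..b} t = (indicator {..a} t + indicator {a<..b} t :: ennreal)" for t
    using assms(2) by (auto simp: indicator_def)
  then have "lower_integral F b
      = (\<integral>\<^sup>+ t. ennreal (F t) * indicator {..a} t + ennreal (F t) * indicator {a<..b} t \<partial>lborel)"
    unfolding lower_integral_def by (simp add: distrib_left)
  also have "\<dots> = lower_integral F a + (\<integral>\<^sup>+t\<in>{a<..b}. ennreal (F t) \<partial>lborel)"
    unfolding lower_integral_def using assms(1) by (intro nn_integral_add) auto
  finally show ?thesis .
qed

lemma nn_integral_on_interval_ge: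
  assumes "0 \<le> c" "a \<le> b" "\<And>t. a < t \<Longrightarrow> t \<le> b \<Longrightarrow> c \<le> F t"
  shows "ennreal (c * (b - a)) \<le> (\<integral>\<^sup>+t\<in>{a<..b}. ennreal (F t) \<partial>lborel)"
proof -
  have "ennreal (c * (b - a)) = (\<integral>\<^sup>+t\<in>{a<..b}. ennreal c \<partial>lborel)"
    using assms by (simp add: nn_integral_cmult_indicator ennreal_mult)
  also have "\<dots> \<le> (\<integral>\<^sup>+t\<in>{a<..b}. ennreal (F t) \<partial>lborel)"
    using assms by (intro nn_integral_mono) (auto simp: indicator_def intro: ennreal_leI)
  finally show ?thesis .
qed

lemma nn_integral_on_interval_le:
  assumes "0 \<le> K" "a \<le> b" "\<And>t. a < t \<Longrightarrow> t \<le> b \<Longrightarrow> F t \<le> K"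
  shows "(\<integral>\<^sup>+t\<in>{a<..b}. ennreal (F t) \<partial>lborel) \<le> ennreal (K * (b - a))"
proof -
  have "(\<integral>\<^sup>+t\<in>{a<..b}. ennreal (F t) \<partial>lborel)
          \<le> (\<integral>\<^sup>+t\<in>{a<..b}. ennreal K \<partial>lborel)"
    using assms by (intro nn_integral_mono) (auto simp: indicator_def intro: ennreal_leI)
  also have "\<dots> = ennreal (K * (b - a))"
    using assms by (simp add: nn_integral_cmult_indicator ennreal_mult)
  finally show ?thesis .
qed

lemma one_less_lower_integral_one:
  assumes "mono H" "\<And>x. 0 < H x" "\<And>x. x \<in> {0<..1} \<Longrightarrow> 1 \<le> H x"
  shows "1 < lower_integral H 1"
proof -
  have meas: "H \<in> borel_measurable borel" using assms(1) by (rule borel_measurable_mono)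
  have unit: "ennreal (1 * (1 - 0)) \<le> (\<integral>\<^sup>+t\<in>{0<..1}. ennreal (H t) \<partial>lborel)"
    using assms(3) by (intro nn_integral_on_interval_ge) auto
  have "0 < ennreal (H (-1) * (0 - (-1)))" using assms(2) by simp
  also have "\<dots> \<le> (\<integral>\<^sup>+t\<in>{-1<..0}. ennreal (H t) \<partial>lborel)"
    using assms(2)[of "-1"]
    by (intro nn_integral_on_interval_ge) (auto intro: monoD[OF assms(1)] less_imp_le)
  also have "\<dots> \<le> lower_integral H 0"
    using lower_integral_split[OF meas, of "-1" 0] by simp
  finally have "1 < 1 + lower_integral H 0"
    using ennreal_add_left_cancel_less[of 1 0 "lower_integral H 0"] by simp
  also have "\<dots> \<le> lower_integral H 1"
    using unit lower_integral_split[OF meas, of 0 1] by (simp add: add.commute add_left_mono)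
  finally show ?thesis .
qed

lemma pos_if_tight:
  assumes mono: "mono H" and nonneg: "\<And>x. 0 \<le> H x" and pos_right: "\<And>x. 0 < x \<Longrightarrow> 0 < H x"
    and tight: "\<And>x. x \<le> 0 \<Longrightarrow> lower_integral H (x + 1) = ennreal (rho * H x)"
  shows "0 < H x"
proof -
  have zero_step: "H (y + 1/2) = 0" if "H y = 0" "y \<le> 0" for y
  proof -
    have "ennreal (H (y + 1/2) * (y + 1 - (y + 1/2)))
            \<le> (\<integral>\<^sup>+t\<in>{y + 1/2<..y + 1}. ennreal (H t) \<partial>lborel)"
      using nonneg by (intro nn_integral_on_interval_ge) (auto intro: monoD[OF mono])
    also have "\<dots> \<le> lower_integral H (y + 1)"
      using lower_integral_split[OF borel_measurable_mono[OF mono], of "y + 1/2" "y + 1"] by simp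
    also have "\<dots> = 0" using tight[OF that(2)] that(1) by simp
    finally show ?thesis using nonneg[of "y + 1/2"] by simp
  qed
  have zero_steps: "H (y + real n / 2) = 0" if "H y = 0" for y n
  proof (induction n)
    case 0
    then show ?case using that by simp
  next
    case (Suc n)
    then have "y + real n / 2 \<le> 0" using pos_right[of "y + real n / 2"] by force
    with zero_step[OF Suc] show ?case by (simp add: field_simps)
  qed
  obtain n :: nat where "- 2 * x < real n" using reals_Archimedean2 by blast
  then have "0 < H (x + real n / 2)" by (intro pos_right) simp
  then show ?thesis using zero_steps[of x n] nonneg[of x] by force
qed

lemma lipschitz_if_tight:
  assumes mono: "mono H" and nonneg: "\<And>x. 0 \<le> H x" and "0 < rho"
    and tight: "\<And>x. x \<le> 0 \<Longrightarrow> lower_integral H (x + 1) = ennreal (rho * H x)"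
  shows "(H 1 / rho)-lipschitz_on {..0} H"
proof (rule lipschitz_onI)
  have step: "H a - H s \<le> H 1 / rho * (a - s)" if "s \<le> a" "a \<le> 0" for s a
  proof -
    have "ennreal (rho * H a)
            = lower_integral H (s + 1) + (\<integral>\<^sup>+t\<in>{s + 1<..a + 1}. ennreal (H t) \<partial>lborel)"
      using that tight[of a] lower_integral_split[OF borel_measurable_mono[OF mono], of "s + 1" "a + 1"]
      by simp
    also have "\<dots> \<le> ennreal (rho * H s) + ennreal (H 1 * ((a + 1) - (s + 1)))"
      using that tight[of s] nonneg
      by (intro add_mono order.refl nn_integral_on_interval_le) (auto intro: monoD[OF mono])
    also have "\<dots> = ennreal (rho * H s + H 1 * (a - s))"
      using that nonneg assms(3) by (simp add: ennreal_plus)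
    finally have "rho * H a \<le> rho * H s + H 1 * (a - s)"
      using that nonneg assms(3) by (subst (asm) ennreal_le_iff) auto
    then show ?thesis using assms(3) by (simp add: field_simps)
  qed
  fix x y :: real assume "x \<in> {..0}" "y \<in> {..0}"
  then show "dist (H x) (H y) \<le> H 1 / rho * dist x y"
    using step[of x y] step[of y x] monoD[OF mono, of x y] monoD[OF mono, of y x]
    by (cases "x \<le> y") (auto simp: dist_real_def)
next
  show "0 \<le> H 1 / rho" using nonneg assms(3) by simp
qed

locale robust_profile =
  fixes rho :: real and G :: "real \<Rightarrow> real"
  assumes rho_pos: "0 < rho" and mono_G: "mono G" and G_nonneg: "\<And>x. 0 \<le> G x"
    and robust_G: "\<And>x. x \<le> 0 \<Longrightarrow> lower_integral G (x + 1) \<le> ennreal (rho * G x)"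
begin

definition robust_minorants :: "(real \<Rightarrow> real) set" where
  "robust_minorants = {H. mono H \<and> (\<forall>t. 0 \<le> H t \<and> H t \<le> G t) \<and> (\<forall>t>0. H t = G t)
      \<and> (\<forall>x\<le>0. lower_integral H (x + 1) \<le> ennreal (rho * H x))}"

definition least_minorant :: "real \<Rightarrow> real" where
  "least_minorant x = (INF H\<in>robust_minorants. H x)"

definition tighten :: "(real \<Rightarrow> real) \<Rightarrow> real \<Rightarrow> real" where
  "tighten H x = (if x \<le> 0 then enn2real (lower_integral H (x + 1)) / rho else G x)"

lemma robust_minorantsD:
  assumes "H \<in> robust_minorants"
  shows "mono H" "0 \<le> H t" "H t \<le> G t" "0 < t \<Longrightarrow> H t = G t"
    and "x \<le> 0 \<Longrightarrow> lower_integral H (x + 1) \<le> ennreal (rho * H x)"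
  using assms by (auto simp: robust_minorants_def)

lemma robust_minorantsI:
  assumes "mono H" "\<And>t. 0 \<le> H t" "\<And>t. H t \<le> G t" "\<And>t. 0 < t \<Longrightarrow> H t = G t"
    and "\<And>x. x \<le> 0 \<Longrightarrow> lower_integral H (x + 1) \<le> ennreal (rho * H x)"
  shows "H \<in> robust_minorants"
  using assms by (auto simp: robust_minorants_def)

lemma G_in_robust_minorants: "G \<in> robust_minorants"
  using mono_G G_nonneg robust_G by (intro robust_minorantsI) auto

lemma lower_integral_finite_below_G:
  assumes "\<And>t. H t \<le> G t" "a \<le> 1"
  shows "lower_integral H a < top"
proof -
  have "lower_integral H a \<le> lower_integral G a"
    using assms(1) by (rule lower_integral_mono)
  also have "\<dots> \<le> ennreal (rho * G (a - 1))" using robust_G[of "a - 1"] assms(2) by simp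
  also have "\<dots> < top" by simp
  finally show ?thesis .
qed

lemma least_minorant_le: "H \<in> robust_minorants \<Longrightarrow> least_minorant x \<le> H x"
  unfolding least_minorant_def
  by (rule cINF_lower[OF bdd_belowI[of _ 0]]) (auto dest: robust_minorantsD)

lemma least_minorant_greatest:
  "(\<And>H. H \<in> robust_minorants \<Longrightarrow> c \<le> H x) \<Longrightarrow> c \<le> least_minorant x"
  unfolding least_minorant_def using G_in_robust_minorants by (intro cINF_greatest) auto

lemma mono_least_minorant: "mono least_minorant"
proof (rule monoI)
  fix x y :: real assume "x \<le> y"
  show "least_minorant x \<le> least_minorant y"
  proof (rule least_minorant_greatest)
    fix H assume H: "H \<in> robust_minorants"
    have "least_minorant x \<le> H x" using H by (rule least_minorant_le)
    also have "\<dots> \<le> H y" using robust_minorantsD(1)[OF H] \<open>x \<le> y\<close> by (rule monoD)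
    finally show "least_minorant x \<le> H y" .
  qed
qed

lemma least_minorant_robust:
  assumes "x \<le> 0"
  shows "lower_integral least_minorant (x + 1) \<le> ennreal (rho * least_minorant x)"
proof -
  define r where "r = enn2real (lower_integral least_minorant (x + 1))"
  have r: "lower_integral least_minorant (x + 1) = ennreal r"
    unfolding r_def using assms least_minorant_le[OF G_in_robust_minorants]
      lower_integral_finite_below_G[of least_minorant "x + 1"]
    by simp
  have "r / rho \<le> least_minorant x"
  proof (rule least_minorant_greatest)
    fix H assume H: "H \<in> robust_minorants"
    have "ennreal r \<le> lower_integral H (x + 1)"
      unfolding r[symmetric] using least_minorant_le[OF H] by (rule lower_integral_mono)
    also have "\<dots> \<le> ennreal (rho * H x)" using H assms by (rule robust_minorantsD)
    finally have "r \<le> rho * H x"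
      using rho_pos robust_minorantsD(2)[OF H] by (subst (asm) ennreal_le_iff) simp_all
    then show "r / rho \<le> H x" using rho_pos by (simp add: field_simps)
  qed
  then show ?thesis unfolding r using rho_pos by (intro ennreal_leI) (simp add: field_simps)
qed

lemma least_minorant_in_robust_minorants: "least_minorant \<in> robust_minorants"
proof (rule robust_minorantsI)
  show "0 \<le> least_minorant t" for t
    by (rule least_minorant_greatest) (rule robust_minorantsD)
  show "least_minorant t \<le> G t" for t
    using G_in_robust_minorants by (rule least_minorant_le)
  show "least_minorant t = G t" if "0 < t" for t
  proof (rule antisym)
    show "least_minorant t \<le> G t" using G_in_robust_minorants by (rule least_minorant_le)
    show "G t \<le> least_minorant t"
      using robust_minorantsD(4)[OF _ that] by (intro least_minorant_greatest) simp
  qed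
qed (fact mono_least_minorant least_minorant_robust)+

lemma lower_integral_eq_tighten:
  assumes "H \<in> robust_minorants" "x \<le> 0"
  shows "lower_integral H (x + 1) = ennreal (rho * tighten H x)"
proof -
  have "lower_integral H (x + 1) < top"
    using robust_minorantsD(3)[OF assms(1)] assms(2) by (intro lower_integral_finite_below_G) auto
  then show ?thesis using assms(2) rho_pos by (simp add: tighten_def)
qed

lemma tighten_le:
  assumes H: "H \<in> robust_minorants"
  shows "tighten H x \<le> H x"
proof (cases "x \<le> 0")
  case True
  have "ennreal (rho * tighten H x) \<le> ennreal (rho * H x)"
    using lower_integral_eq_tighten[OF H True] robust_minorantsD(5)[OF H True] by simp
  then have "rho * tighten H x \<le> rho * H x"
    using rho_pos robust_minorantsD(2)[OF H] by (subst (asm) ennreal_le_iff) simp_all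
  then show ?thesis using rho_pos by simp
next
  case False
  then show ?thesis using robust_minorantsD(4)[OF H] by (simp add: tighten_def)
qed

lemma tighten_mono:
  assumes H: "H \<in> robust_minorants"
  shows "mono (tighten H)"
proof (rule monoI)
  fix x y :: real assume "x \<le> y"
  consider "y \<le> 0" | "x \<le> 0" "0 < y" | "0 < x" by linarith
  then show "tighten H x \<le> tighten H y"
  proof cases
    case 1
    have "ennreal (rho * tighten H x) \<le> ennreal (rho * tighten H y)"
      using \<open>x \<le> y\<close> 1 lower_integral_mono_bound[of "x + 1" "y + 1" H]
      by (simp add: lower_integral_eq_tighten[OF H])
    then have "rho * tighten H x \<le> rho * tighten H y"
      using rho_pos 1 by (subst (asm) ennreal_le_iff) (simp_all add: tighten_def)
    then show ?thesis using rho_pos by simp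
  next
    case 2
    have "tighten H x \<le> H x" using H by (rule tighten_le)
    also have "\<dots> \<le> H y" using robust_minorantsD(1)[OF H] \<open>x \<le> y\<close> by (rule monoD)
    also have "\<dots> = tighten H y" using robust_minorantsD(4)[OF H] 2 by (simp add: tighten_def)
    finally show ?thesis .
  next
    case 3
    then show ?thesis using \<open>x \<le> y\<close> mono_G by (simp add: tighten_def monoD)
  qed
qed

lemma tighten_in_robust_minorants:
  assumes H: "H \<in> robust_minorants"
  shows "tighten H \<in> robust_minorants"
proof (rule robust_minorantsI)
  show "mono (tighten H)" using H by (rule tighten_mono)
  show "0 \<le> tighten H t" for t
    using rho_pos G_nonneg by (simp add: tighten_def)
  show "tighten H t \<le> G t" for t
    using tighten_le[OF H, of t] robust_minorantsD(3)[OF H, of t] by linarith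
  show "tighten H t = G t" if "0 < t" for t
    using that by (simp add: tighten_def)
  show "lower_integral (tighten H) (x + 1) \<le> ennreal (rho * tighten H x)" if "x \<le> 0" for x
    using lower_integral_mono[of "x + 1" "tighten H" H] tighten_le[OF H]
    by (simp add: lower_integral_eq_tighten[OF H that])
qed

lemma least_minorant_tight:
  assumes "x \<le> 0"
  shows "lower_integral least_minorant (x + 1) = ennreal (rho * least_minorant x)"
proof -
  have "tighten least_minorant x = least_minorant x"
    using least_minorant_in_robust_minorants
    by (intro antisym tighten_le least_minorant_le tighten_in_robust_minorants)
  then show ?thesis
    using lower_integral_eq_tighten[OF least_minorant_in_robust_minorants assms] by simp
qed

lemma least_minorant_pos:
  assumes "\<And>x. 0 < x \<Longrightarrow> 0 < G x"
  shows "0 < least_minorant x"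
proof (rule pos_if_tight[where H = least_minorant and rho = rho])
  show "mono least_minorant"
    using least_minorant_in_robust_minorants by (rule robust_minorantsD)
  show "0 \<le> least_minorant t" for t
    using least_minorant_in_robust_minorants by (rule robust_minorantsD)
  show "0 < least_minorant t" if "0 < t" for t
    using robust_minorantsD(4)[OF least_minorant_in_robust_minorants that] assms[OF that] by simp
  show "lower_integral least_minorant (t + 1) = ennreal (rho * least_minorant t)" if "t \<le> 0" for t
    using that by (rule least_minorant_tight)
qed

lemma least_minorant_continuous_at_left:
  assumes "\<And>x. 0 < x \<Longrightarrow> continuous (at_left x) G"
  shows "continuous (at_left a) least_minorant"
proof (cases "a \<le> 0")
  case True
  have "(least_minorant 1 / rho)-lipschitz_on {..0} least_minorant"
    using robust_minorantsD[OF least_minorant_in_robust_minorants] rho_pos least_minorant_tight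
    by (intro lipschitz_if_tight)
  then have "continuous_on {..0} least_minorant" by (rule lipschitz_on_continuous_on)
  then show ?thesis by (rule continuous_on_imp_continuous_within) (use True in auto)
next
  case False
  have "eventually (\<lambda>t. t \<in> {0<..<a}) (at_left a)"
    using False by (intro eventually_at_left_real) simp
  then have "eventually (\<lambda>t. least_minorant t = G t) (at_left a)"
    by (rule eventually_mono) (simp add: robust_minorantsD(4)[OF least_minorant_in_robust_minorants])
  moreover have "least_minorant a = G a"
    using False by (simp add: robust_minorantsD(4)[OF least_minorant_in_robust_minorants])
  moreover have "continuous (at_left a) G" using False by (intro assms) simp
  ultimately show ?thesis by (subst continuous_at_within_cong)
qed

lemma enn2real_lower_integral_least_minorant_le:
  assumes "lower_integral G 1 \<le> ennreal chi" "0 \<le> chi"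
  shows "enn2real (lower_integral least_minorant 1) \<le> chi"
proof -
  have "lower_integral least_minorant 1 \<le> lower_integral G 1"
    using least_minorant_le[OF G_in_robust_minorants] by (rule lower_integral_mono)
  with assms show ?thesis by (metis enn2real_leI order_trans)
qed

lemma tight_bidding_profile_least_minorant:
  assumes G: "bidding_profile rho chi G"
  shows "tight_bidding_profile rho (enn2real (lower_integral least_minorant 1)) least_minorant"
proof -
  define chi' where "chi' = enn2real (lower_integral least_minorant 1)"
  note LM = robust_minorantsD[OF least_minorant_in_robust_minorants]
  have pos: "0 < least_minorant x" for x
    using G by (intro least_minorant_pos) (simp add: bidding_profile_def)
  have chi': "lower_integral least_minorant 1 = ennreal chi'"
    unfolding chi'_def using lower_integral_finite_below_G[of least_minorant 1] LM(3) by simp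
  have "1 < chi'"
    using one_less_lower_integral_one[of least_minorant] LM(1,4) G pos chi'
    by (simp add: bidding_profile_def)
  moreover have "chi' \<le> rho"
    using G enn2real_lower_integral_least_minorant_le[of chi]
    by (simp add: chi'_def bidding_profile_def)
  moreover have "lower_integral least_minorant (x + 1) \<le> ennreal (rho * least_minorant x)" for x
  proof (cases "x \<le> 0")
    case True
    then show ?thesis by (simp add: least_minorant_tight)
  next
    case False
    have "lower_integral least_minorant (x + 1) \<le> lower_integral G (x + 1)"
      using LM(3) by (rule lower_integral_mono)
    also have "\<dots> \<le> ennreal (rho * G x)" using G by (simp add: bidding_profile_def)
    finally show ?thesis using False LM(4)[of x] by simp
  qed
  moreover have "continuous (at_left x) least_minorant" for x
    using G by (intro least_minorant_continuous_at_left) (simp add: bidding_profile_def)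
  moreover have "least_minorant x < 1" if "x < 0" for x
    using LM(3)[of x] G that by (auto simp: bidding_profile_def intro: le_less_trans)
  ultimately show ?thesis
    unfolding tight_bidding_profile_def bidding_profile_def chi'_def[symmetric]
    using G LM(1,4) pos chi' least_minorant_tight by (auto simp: bidding_profile_def)
qed

end

theorem lemma2:
  fixes rho chi :: real and G \<phi> :: "real \<Rightarrow> real"
  assumes "rho > chi" and "chi > 1"
    and "bidding_profile rho chi G"
    and "induced_by G \<phi>"
  shows "\<exists>G' chi'. chi' \<le> chi \<and> tight_bidding_profile rho chi' G' \<and> induced_by G' \<phi>"
proof -
  note G = assms(3)[unfolded bidding_profile_def]
  interpret robust_profile rho G
    by unfold_locales (use G in \<open>auto intro: less_imp_le\<close>)
  have "enn2real (lower_integral least_minorant 1) \<le> chi"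
    using G by (intro enn2real_lower_integral_least_minorant_le) auto
  moreover have "tight_bidding_profile rho (enn2real (lower_integral least_minorant 1)) least_minorant"
    using assms(3) by (rule tight_bidding_profile_least_minorant)
  moreover have "induced_by least_minorant \<phi>"
    using assms(4) robust_minorantsD(4)[OF least_minorant_in_robust_minorants]
    by (simp add: induced_by_def)
  ultimately show ?thesis by blast
qed

end
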